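(* Let $n,d,k\in\mathbb{N}$ with $d\ge16k\ge32$, and set $\beta=1+\frac12\log\big(\frac{d}{16k}\big)$. Let $P^1,\dots,P^d$ be independent draws from $\mathsf{Beta}(\beta,\beta)$ and let $X\in(\{0,1\}^d)^n$ have entries $X_i^j$ independent conditioned on $P$ with $\mathbb{E}[X_i^j\mid P]=P^j$. Let $M:(\{0,1\}^d)^n\to\{0,1\}^d$ be $(1,1/(8nd))$-differentially private. Suppose that for every $j\in[d]$, conditioned on $P$ (probabilities over $X$ and the randomness of $M$): (1) if $P^j\le\frac78-\frac3{16}$ then $\Pr[M(X)^j=1]\le\frac{k}{16d}$; (2) if $P^j\ge\frac78$ then $\Pr[M(X)^j=1]\ge1-\frac1{16}$. Then $n\ge\frac1{16}\sqrt{k}\,\log\big(\frac{d}{16k}\big)$.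
   Context: A dataset $x\in(\{0,1\}^d)^n$ is an $n\times d$ matrix with rows $x_i$; two datasets are neighbors if they differ in at most one row. A randomized algorithm $M$ is $(\varepsilon,\delta)$-differentially private if for all neighboring $x,x'$ and all sets $R$ of outputs, $\Pr[M(x)\in R]\le e^\varepsilon\Pr[M(x')\in R]+\delta$. $\mathsf{Beta}(\alpha,\beta)$ has density proportional to $p^{\alpha-1}(1-p)^{\beta-1}$ on $[0,1]$. $\log$ is the natural logarithm. *)

theory Defs
  imports "HOL-Probability.Probability"
begin

definition datasets :: "nat \<Rightarrow> nat \<Rightarrow> bool list list set" where
  "datasets n d = {x. length x = n \<and> (\<forall>r\<in>set x. length r = d)}"

definition neighbors :: "bool list list \<Rightarrow> bool list list \<Rightarrow> bool" where
  "neighbors x x' \<longleftrightarrow> length x = length x' \<and> card {i. i < length x \<and> x ! i \<noteq> x' ! i} \<le> 1"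

definition diff_private ::
  "nat \<Rightarrow> nat \<Rightarrow> real \<Rightarrow> real \<Rightarrow> (bool list list \<Rightarrow> 'b pmf) \<Rightarrow> bool" where
  "diff_private n d \<epsilon> \<delta> M \<longleftrightarrow>
     (\<forall>x\<in>datasets n d. \<forall>x'\<in>datasets n d. neighbors x x' \<longrightarrow>
        (\<forall>R. measure_pmf.prob (M x) R \<le> exp \<epsilon> * measure_pmf.prob (M x') R + \<delta>))"

definition beta_density :: "real \<Rightarrow> real \<Rightarrow> real \<Rightarrow> real" where
  "beta_density a b p =
     (if 0 < p \<and> p < 1 then p powr (a - 1) * (1 - p) powr (b - 1) / Beta a b else 0)"

definition beta_measure :: "real \<Rightarrow> real \<Rightarrow> real measure" where
  "beta_measure a b = density lborel (\<lambda>p. ennreal (beta_density a b p))"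

text \<open>Law of P = (P^1,...,P^d), coordinates iid Beta(a,b) (coordinates indexed 0..d-1).\<close>
definition beta_prior :: "nat \<Rightarrow> real \<Rightarrow> (nat \<Rightarrow> real) measure" where
  "beta_prior d a = PiM {..<d} (\<lambda>_. beta_measure a a)"

definition data_weight :: "nat \<Rightarrow> nat \<Rightarrow> (nat \<Rightarrow> real) \<Rightarrow> bool list list \<Rightarrow> real" where
  "data_weight n d p x = (\<Prod>i<n. \<Prod>j<d. if x ! i ! j then p j else 1 - p j)"

definition cond_prob_one ::
  "nat \<Rightarrow> nat \<Rightarrow> (bool list list \<Rightarrow> bool list pmf) \<Rightarrow> (nat \<Rightarrow> real) \<Rightarrow> nat \<Rightarrow> real" where
  "cond_prob_one n d M p j =
     (\<Sum>x\<in>datasets n d. data_weight n d p x * measure_pmf.prob (M x) {y. y ! j})"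

end

theory Submission
  imports Defs
begin

text \<open>Draw \<open>p\<close> from the prior and the dataset \<open>x\<close> from \<open>p\<close>, and consider the correlation
  \<open>A = \<Sum>i \<Sum>j M(x)\<^sub>j (x\<^sub>i\<^sub>j - p\<^sub>j)\<close> between the output and the rows.
  Privacy bounds \<open>E A\<close> from above: replacing row \<open>i\<close> by an independent fresh row changes the law of
  \<open>M(x)\<close> by at most a factor \<open>e\<^sup>\<epsilon>\<close> plus \<open>\<delta>\<close>, and a fresh row is nearly uncorrelated with the
  output; with \<open>T = E |M(x)|\<close> this gives \<open>E A \<le> n (e\<^sup>\<epsilon> \<surd>T / 2 + d \<delta>)\<close>.
  For the \<open>Beta(\<beta>, \<beta>)\<close> prior, integration by parts gives the fingerprinting identity
  \<open>E A = \<beta> E \<Sum>j M(x)\<^sub>j (2 p\<^sub>j - 1)\<close>, and accuracy makes the right-hand side at least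
  \<open>\<beta> (3T/8 - 11k/128)\<close>, where \<open>T \<ge> 15k/16\<close> because each \<open>p\<^sub>j\<close> exceeds \<open>7/8\<close> with probability
  at least \<open>k/d\<close> for \<open>\<beta> = 1 + log (d/16k) / 2\<close>. Comparing the two bounds on \<open>E A\<close> yields
  \<open>n \<ge> \<surd>k log (d/16k) / 16\<close>.\<close>

section \<open>Product weights on binary datasets\<close>

lemma sum_lists_length_prod:
  fixes F :: "nat \<Rightarrow> 'a \<Rightarrow> real"
  assumes "finite A"
  shows "(\<Sum>xs\<in>{xs. set xs \<subseteq> A \<and> length xs = m}. \<Prod>i<m. F i (xs ! i)) = (\<Prod>i<m. \<Sum>a\<in>A. F i a)"
  using assms
proof (induction m arbitrary: F)
  case 0
  have "{xs. set xs \<subseteq> A \<and> length xs = 0} = {[]}" by auto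
  then show ?case by simp
next
  case (Suc m)
  let ?L = "{xs. set xs \<subseteq> A \<and> length xs = m}"
  have eq: "{xs. set xs \<subseteq> A \<and> length xs = Suc m} = (\<lambda>(a, xs). a # xs) ` (A \<times> ?L)"
    by (auto simp: length_Suc_conv image_iff)
  have inj: "inj_on (\<lambda>(a, xs). a # xs) (A \<times> ?L)"
    by (auto simp: inj_on_def)
  have "(\<Sum>xs\<in>{xs. set xs \<subseteq> A \<and> length xs = Suc m}. \<Prod>i<Suc m. F i (xs ! i))
      = (\<Sum>(a, xs)\<in>A \<times> ?L. \<Prod>i<Suc m. F i ((a # xs) ! i))"
    unfolding eq by (subst sum.reindex[OF inj]) (simp add: case_prod_unfold)
  also have "\<dots> = (\<Sum>a\<in>A. \<Sum>xs\<in>?L. F 0 a * (\<Prod>i<m. F (Suc i) (xs ! i)))"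
    by (subst sum.cartesian_product[symmetric])
      (simp only: prod.lessThan_Suc_shift nth_Cons_0 nth_Cons_Suc)
  also have "\<dots> = (\<Sum>a\<in>A. F 0 a * (\<Prod>i<m. \<Sum>a\<in>A. F (Suc i) a))"
    using Suc.IH[OF Suc.prems, of "\<lambda>i. F (Suc i)"] by (simp add: sum_distrib_left[symmetric])
  also have "\<dots> = (\<Prod>i<Suc m. \<Sum>a\<in>A. F i a)"
    by (simp only: prod.lessThan_Suc_shift sum_distrib_right)
  finally show ?case .
qed

definition binary_rows :: "nat \<Rightarrow> bool list set" where
  "binary_rows d = {r. length r = d}"

definition row_weight :: "(nat \<Rightarrow> real) \<Rightarrow> nat \<Rightarrow> bool list \<Rightarrow> real" where
  "row_weight p d r = (\<Prod>j<d. if r ! j then p j else 1 - p j)"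

lemma binary_rows_eq_lists: "binary_rows d = {xs. set xs \<subseteq> UNIV \<and> length xs = d}"
  by (auto simp: binary_rows_def)

lemma finite_binary_rows: "finite (binary_rows d)"
  unfolding binary_rows_eq_lists by (rule finite_lists_length_eq) simp

lemma datasets_eq_lists: "datasets n d = {xs. set xs \<subseteq> binary_rows d \<and> length xs = n}"
  by (auto simp: datasets_def binary_rows_def)

lemma data_weight_eq_prod_row_weight: "data_weight n d p x = (\<Prod>i<n. row_weight p d (x ! i))"
  by (simp add: data_weight_def row_weight_def)

lemma row_weight_nonneg: "\<forall>j<d. 0 \<le> p j \<and> p j \<le> 1 \<Longrightarrow> 0 \<le> row_weight p d r"
  unfolding row_weight_def by (intro prod_nonneg) auto

lemma data_weight_nonneg: "\<forall>j<d. 0 \<le> p j \<and> p j \<le> 1 \<Longrightarrow> 0 \<le> data_weight n d p x"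
  unfolding data_weight_eq_prod_row_weight by (intro prod_nonneg) (auto intro: row_weight_nonneg)

lemma sum_row_weight_prod:
  "(\<Sum>r\<in>binary_rows d. row_weight p d r * (\<Prod>j<d. h j (r ! j)))
     = (\<Prod>j<d. p j * h j True + (1 - p j) * h j False)"
proof -
  have "(\<Sum>r\<in>binary_rows d. row_weight p d r * (\<Prod>j<d. h j (r ! j)))
      = (\<Sum>r\<in>binary_rows d. \<Prod>j<d. (if r ! j then p j else 1 - p j) * h j (r ! j))"
    by (simp add: row_weight_def prod.distrib)
  also have "\<dots> = (\<Prod>j<d. \<Sum>b\<in>UNIV. (if b then p j else 1 - p j) * h j b)"
    unfolding binary_rows_eq_lists by (rule sum_lists_length_prod) simp
  finally show ?thesis by (simp add: UNIV_bool add.commute)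
qed

lemma sum_row_weight: "(\<Sum>r\<in>binary_rows d. row_weight p d r) = 1"
  using sum_row_weight_prod[where h="\<lambda>_ _. 1"] by simp

lemma sum_data_weight: "(\<Sum>x\<in>datasets n d. data_weight n d p x) = 1"
proof -
  have "(\<Sum>x\<in>datasets n d. data_weight n d p x) = (\<Prod>i<n. \<Sum>r\<in>binary_rows d. row_weight p d r)"
    unfolding data_weight_eq_prod_row_weight datasets_eq_lists
    by (rule sum_lists_length_prod) (simp add: finite_binary_rows)
  then show ?thesis by (simp add: sum_row_weight)
qed

lemma sum_row_weight_covariance:
  assumes "j < d" "j' < d"
  shows "(\<Sum>r\<in>binary_rows d. row_weight p d r * ((of_bool (r ! j) - p j) * (of_bool (r ! j') - p j')))
     = (if j = j' then p j * (1 - p j) else 0)"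
proof -
  define h where
    "h l b = (if l = j then of_bool b - p j else 1) * (if l = j' then of_bool b - p j' else (1::real))"
    for l b
  have "(\<Prod>l<d. h l (r ! l)) = (of_bool (r ! j) - p j) * (of_bool (r ! j') - p j')" for r
    using assms by (simp add: h_def prod.distrib)
  then have "(\<Sum>r\<in>binary_rows d. row_weight p d r * ((of_bool (r ! j) - p j) * (of_bool (r ! j') - p j')))
      = (\<Prod>l<d. p l * h l True + (1 - p l) * h l False)"
    using sum_row_weight_prod[where d=d and p=p and h=h] by simp
  also have "\<dots> = (if j = j' then p j * (1 - p j) else 0)"
  proof (cases "j = j'")
    case True
    have "(\<Prod>l<d. p l * h l True + (1 - p l) * h l False) = (\<Prod>l<d. if l = j then p j * (1 - p j) else 1)"
      by (rule prod.cong) (auto simp: h_def True algebra_simps)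
    then show ?thesis using assms True by simp
  next
    case False
    have "p j * h j True + (1 - p j) * h j False = 0"
      using False by (simp add: h_def algebra_simps)
    then show ?thesis using assms False by (subst prod_zero) auto
  qed
  finally show ?thesis .
qed

lemma sum_row_weight_linear_sq:
  fixes u :: "nat \<Rightarrow> real"
  shows "(\<Sum>r\<in>binary_rows d. row_weight p d r * (\<Sum>j<d. u j * (of_bool (r ! j) - p j))\<^sup>2)
     = (\<Sum>j<d. (u j)\<^sup>2 * (p j * (1 - p j)))"
proof -
  have "(\<Sum>r\<in>binary_rows d. row_weight p d r * (\<Sum>j<d. u j * (of_bool (r ! j) - p j))\<^sup>2)
     = (\<Sum>j<d. \<Sum>j'<d. u j * u j' * (\<Sum>r\<in>binary_rows d. row_weight p d r *
          ((of_bool (r ! j) - p j) * (of_bool (r ! j') - p j'))))"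
    by (simp add: power2_eq_square sum_product sum_distrib_left sum.swap[of _ "binary_rows d"] algebra_simps)
  also have "\<dots> = (\<Sum>j<d. \<Sum>j'<d. u j * u j' * (if j = j' then p j * (1 - p j) else 0))"
    by (intro sum.cong refl) (simp add: sum_row_weight_covariance)
  also have "\<dots> = (\<Sum>j<d. (u j)\<^sup>2 * (p j * (1 - p j)))"
    by (simp add: power2_eq_square if_distrib cong: if_cong)
  finally show ?thesis .
qed

section \<open>Privacy against a resampled row\<close>

lemma sum_mult_le_of_subset_sums_le:
  fixes q1 q2 f :: "'a \<Rightarrow> real"
  assumes fin: "finite Y"
    and subset_sums: "\<forall>R\<subseteq>Y. sum q1 R \<le> c * sum q2 R + \<delta>"
    and "0 \<le> c" "0 \<le> \<delta>" and f: "\<forall>y\<in>Y. 0 \<le> f y \<and> f y \<le> D" and "0 \<le> D"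
  shows "(\<Sum>y\<in>Y. q1 y * f y) \<le> c * (\<Sum>y\<in>Y. q2 y * f y) + D * \<delta>"
  using f \<open>0 \<le> D\<close>
proof (induction "card (f ` Y - {0})" arbitrary: f D rule: less_induct)
  case (less f D)
  show ?case
  proof (cases "f ` Y - {0} = {}")
    case True
    then have "\<forall>y\<in>Y. f y = 0" by auto
    then show ?thesis using less.prems \<open>0 \<le> \<delta>\<close> by simp
  next
    case False
    text \<open>Peel off the smallest nonzero value \<open>v\<close> of \<open>f\<close>: \<open>f = g + v\<close> on \<open>R = {f \<noteq> 0}\<close>,
      and \<open>g\<close> takes fewer nonzero values than \<open>f\<close>.\<close>
    define v where "v = Min (f ` Y - {0})"
    have finF: "finite (f ` Y - {0})" using fin by simp
    have vin: "v \<in> f ` Y - {0}" unfolding v_def using False finF by (rule Min_in[rotated])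
    have vle: "v \<le> f y" if "y \<in> Y" "f y \<noteq> 0" for y
      unfolding v_def using finF that by (intro Min_le) auto
    have v: "0 < v" "v \<le> D" using vin less.prems by force+
    define R where "R = {y\<in>Y. f y \<noteq> 0}"
    define g where "g y = f y - (if f y = 0 then 0 else v)" for y
    have g: "\<forall>y\<in>Y. 0 \<le> g y \<and> g y \<le> D - v"
      using less.prems vle v by (auto simp: g_def)
    have "g ` Y - {0} \<subseteq> (\<lambda>u. u - v) ` (f ` Y - {0, v})"
      by (auto simp: g_def split: if_splits)
    then have "card (g ` Y - {0}) \<le> card ((\<lambda>u. u - v) ` (f ` Y - {0, v}))"
      by (rule card_mono[rotated]) (use fin in simp)
    also have "\<dots> \<le> card (f ` Y - {0, v})" by (rule card_image_le) (use fin in simp)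
    also have "\<dots> < card (f ` Y - {0})"
      by (rule psubset_card_mono[OF finF]) (use vin in auto)
    finally have IH: "(\<Sum>y\<in>Y. q1 y * g y) \<le> c * (\<Sum>y\<in>Y. q2 y * g y) + (D - v) * \<delta>"
      using less.hyps[of g "D - v"] g v by auto
    have split: "(\<Sum>y\<in>Y. q y * f y) = (\<Sum>y\<in>Y. q y * g y) + v * sum q R" for q :: "'a \<Rightarrow> real"
    proof -
      have "(\<Sum>y\<in>Y. q y * f y) = (\<Sum>y\<in>Y. q y * g y + v * (if y \<in> R then q y else 0))"
        by (intro sum.cong) (auto simp: g_def R_def algebra_simps)
      also have "\<dots> = (\<Sum>y\<in>Y. q y * g y) + v * sum q R"
        using fin by (simp add: sum.distrib sum_distrib_left[symmetric] sum.If_cases R_def Int_def conj_commute)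
      finally show ?thesis .
    qed
    have "(\<Sum>y\<in>Y. q1 y * f y) = (\<Sum>y\<in>Y. q1 y * g y) + v * sum q1 R" by (rule split)
    also have "\<dots> \<le> c * (\<Sum>y\<in>Y. q2 y * g y) + (D - v) * \<delta> + v * (c * sum q2 R + \<delta>)"
      using IH subset_sums v by (intro add_mono mult_left_mono) (auto simp: R_def)
    also have "\<dots> = c * (\<Sum>y\<in>Y. q2 y * f y) + D * \<delta>"
      unfolding split[of q2] by (simp add: algebra_simps)
    finally show ?thesis .
  qed
qed

lemma neighbors_list_update: "i < length x \<Longrightarrow> neighbors x (x[i := r])"
proof -
  have "{i'. i' < length x \<and> x ! i' \<noteq> x[i := r] ! i'} \<subseteq> {i}"
    by (auto, metis nth_list_update_neq)
  then show ?thesis unfolding neighbors_def by (simp add: card_mono[of "{i}", THEN order_trans])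
qed

lemma list_update_in_datasets:
  "x \<in> datasets n d \<Longrightarrow> r \<in> binary_rows d \<Longrightarrow> x[i := r] \<in> datasets n d"
  unfolding datasets_def binary_rows_def by (auto dest!: set_update_subset_insert[THEN subsetD])

lemma data_weight_list_update:
  assumes "i < length x"
  shows "data_weight (length x) d p (x[i := r]) * row_weight p d (x ! i)
       = data_weight (length x) d p x * row_weight p d r"
proof -
  have remove: "(\<Prod>i'<length x. f i') = f i * (\<Prod>i'\<in>{..<length x} - {i}. f i')" for f :: "nat \<Rightarrow> real"
    using assms by (subst prod.remove[of _ i]) auto
  have "(\<Prod>i'\<in>{..<length x} - {i}. row_weight p d (x[i := r] ! i'))
      = (\<Prod>i'\<in>{..<length x} - {i}. row_weight p d (x ! i'))"
    by (intro prod.cong) auto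
  then show ?thesis unfolding data_weight_eq_prod_row_weight
    by (subst (1 2) remove) (use assms in simp)
qed

text \<open>Exchanging row \<open>i\<close> of the dataset with an independent fresh row preserves the joint law.\<close>

lemma sum_resample_row:
  assumes "i < n"
  shows "(\<Sum>x\<in>datasets n d. \<Sum>r\<in>binary_rows d. data_weight n d p x * row_weight p d r * \<Phi> (x[i := r]) (x ! i))
       = (\<Sum>x\<in>datasets n d. \<Sum>r\<in>binary_rows d. data_weight n d p x * row_weight p d r * \<Phi> x r)"
proof -
  let ?S = "datasets n d \<times> binary_rows d"
  define \<sigma> where "\<sigma> = (\<lambda>(x :: bool list list, r :: bool list). (x[i := r], x ! i))"
  have mem: "\<sigma> a \<in> ?S" if "a \<in> ?S" for a
    using that assms by (auto simp: \<sigma>_def intro: list_update_in_datasets) (auto simp: datasets_def binary_rows_def)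
  have inv: "\<sigma> (\<sigma> a) = a" if "a \<in> ?S" for a
    using that assms by (auto simp: \<sigma>_def datasets_def)
  have "(\<Sum>(x, r)\<in>?S. data_weight n d p x * row_weight p d r * \<Phi> (x[i := r]) (x ! i))
      = (\<Sum>(x, r)\<in>?S. data_weight n d p x * row_weight p d r * \<Phi> x r)"
  proof (rule sum.reindex_bij_witness[where i=\<sigma> and j=\<sigma>])
    fix a assume a: "a \<in> ?S"
    obtain x r where xr: "a = (x, r)" by (cases a)
    have "length x = n" using a xr by (auto simp: datasets_def)
    then show "(case \<sigma> a of (x, r) \<Rightarrow> data_weight n d p x * row_weight p d r * \<Phi> x r) =
          (case a of (x, r) \<Rightarrow> data_weight n d p x * row_weight p d r * \<Phi> (x[i := r]) (x ! i))"
      using data_weight_list_update[of i x d p r] assms by (auto simp: \<sigma>_def xr)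
  qed (auto intro: mem inv)
  then show ?thesis by (simp add: sum.cartesian_product)
qed

lemma dp_resample_row:
  assumes dp: "diff_private n d \<epsilon> \<delta> M" and "0 \<le> \<delta>" and "i < n"
    and p: "\<forall>j<d. 0 \<le> p j \<and> p j \<le> 1" and f: "\<And>r y. 0 \<le> f r y \<and> f r y \<le> D"
  shows "(\<Sum>x\<in>datasets n d. data_weight n d p x * (\<Sum>y\<in>binary_rows d. pmf (M x) y * f (x ! i) y))
     \<le> exp \<epsilon> * (\<Sum>x\<in>datasets n d. \<Sum>r\<in>binary_rows d. data_weight n d p x * row_weight p d r *
            (\<Sum>y\<in>binary_rows d. pmf (M x) y * f r y)) + D * \<delta>"
proof -
  let ?D = "datasets n d" and ?Y = "binary_rows d" and ?w = "data_weight n d p" and ?v = "row_weight p d"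
  have w: "0 \<le> ?w x * ?v r" for x r
    using p by (intro mult_nonneg_nonneg data_weight_nonneg row_weight_nonneg)
  have "0 \<le> D" using f by (meson order_trans)
  have step: "(\<Sum>y\<in>?Y. pmf (M x) y * f (x ! i) y)
      \<le> exp \<epsilon> * (\<Sum>y\<in>?Y. pmf (M (x[i := r])) y * f (x ! i) y) + D * \<delta>"
    if x: "x \<in> ?D" and r: "r \<in> ?Y" for x r
  proof (rule sum_mult_le_of_subset_sums_le[OF finite_binary_rows])
    have "x[i := r] \<in> ?D" using x r by (rule list_update_in_datasets)
    moreover have "neighbors x (x[i := r])"
      using x \<open>i < n\<close> by (intro neighbors_list_update) (simp add: datasets_def)
    ultimately
    show "\<forall>R\<subseteq>?Y. sum (pmf (M x)) R \<le> exp \<epsilon> * sum (pmf (M (x[i := r]))) R + \<delta>"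
      using dp x finite_subset[OF _ finite_binary_rows]
      by (auto simp: diff_private_def measure_measure_pmf_finite[symmetric])
  qed (use f \<open>0 \<le> \<delta>\<close> \<open>0 \<le> D\<close> in auto)
  have "(\<Sum>x\<in>?D. ?w x * (\<Sum>y\<in>?Y. pmf (M x) y * f (x ! i) y))
      = (\<Sum>x\<in>?D. \<Sum>r\<in>?Y. ?w x * ?v r * (\<Sum>y\<in>?Y. pmf (M x) y * f (x ! i) y))"
    by (simp add: sum_distrib_left[symmetric] sum_distrib_right[symmetric] sum_row_weight)
  also have "\<dots> \<le> (\<Sum>x\<in>?D. \<Sum>r\<in>?Y. ?w x * ?v r *
      (exp \<epsilon> * (\<Sum>y\<in>?Y. pmf (M (x[i := r])) y * f (x ! i) y) + D * \<delta>))"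
    by (intro sum_mono mult_left_mono step w)
  also have "\<dots> = exp \<epsilon> * (\<Sum>x\<in>?D. \<Sum>r\<in>?Y. ?w x * ?v r *
      (\<Sum>y\<in>?Y. pmf (M (x[i := r])) y * f (x ! i) y)) + D * \<delta>"
    by (simp add: distrib_left sum.distrib sum_distrib_left[symmetric] sum_distrib_right[symmetric]
        sum_row_weight sum_data_weight mult_ac)
  also have "\<dots> = exp \<epsilon> * (\<Sum>x\<in>?D. \<Sum>r\<in>?Y. ?w x * ?v r * (\<Sum>y\<in>?Y. pmf (M x) y * f r y)) + D * \<delta>"
    using sum_resample_row[OF \<open>i < n\<close>, of d p "\<lambda>x' r'. \<Sum>y\<in>?Y. pmf (M x') y * f r' y"] by simp
  finally show ?thesis .
qed

section \<open>The correlation of the output with a row\<close>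

lemma sum_mult_affine:
  fixes q g :: "'a \<Rightarrow> real"
  assumes "sum q A = 1"
  shows "(\<Sum>y\<in>A. q y * (a * g y + b)) = a * (\<Sum>y\<in>A. q y * g y) + b"
  using assms by (simp add: distrib_left sum.distrib sum_distrib_left sum_distrib_right[symmetric] mult.left_commute)

lemma measure_pmf_eq_sum_binary_rows:
  assumes "set_pmf Q \<subseteq> binary_rows d"
  shows "measure_pmf.prob Q R = (\<Sum>y\<in>binary_rows d. pmf Q y * of_bool (y \<in> R))"
proof -
  have "measure_pmf.prob Q R = measure_pmf.prob Q (R \<inter> binary_rows d)"
    using assms by (intro measure_eq_AE) (auto simp: AE_measure_pmf_iff)
  also have "\<dots> = sum (pmf Q) (R \<inter> binary_rows d)"
    by (rule measure_measure_pmf_finite) (simp add: finite_binary_rows)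
  also have "\<dots> = (\<Sum>y\<in>binary_rows d. pmf Q y * of_bool (y \<in> R))"
    using finite_binary_rows[of d] by (simp add: Int_commute sum.inter_filter Int_def[of "binary_rows d"])
  finally show ?thesis .
qed

lemma sum_pmf_binary_rows: "set_pmf Q \<subseteq> binary_rows d \<Longrightarrow> (\<Sum>y\<in>binary_rows d. pmf Q y) = 1"
  using measure_pmf_eq_sum_binary_rows[of Q d UNIV] by simp

definition row_correlation :: "(nat \<Rightarrow> real) \<Rightarrow> nat \<Rightarrow> bool list \<Rightarrow> bool list \<Rightarrow> real" where
  "row_correlation p d r y = (\<Sum>j<d. of_bool (y ! j) * (of_bool (r ! j) - p j))"

definition count_ones :: "nat \<Rightarrow> bool list \<Rightarrow> real" where
  "count_ones d y = (\<Sum>j<d. of_bool (y ! j))"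

lemma row_correlation_le:
  assumes "\<forall>j<d. 0 \<le> p j \<and> p j \<le> 1"
  shows "row_correlation p d r y \<le> d"
proof -
  have "row_correlation p d r y \<le> (\<Sum>j<d. 1)"
    unfolding row_correlation_def by (intro sum_mono) (use assms in auto)
  then show ?thesis by simp
qed

lemma sum_row_weight_row_correlation_sq:
  "(\<Sum>r\<in>binary_rows d. row_weight p d r * (row_correlation p d r y)\<^sup>2) \<le> count_ones d y / 4"
proof -
  have "(\<Sum>r\<in>binary_rows d. row_weight p d r * (row_correlation p d r y)\<^sup>2)
      = (\<Sum>j<d. (of_bool (y ! j))\<^sup>2 * (p j * (1 - p j)))"
    unfolding row_correlation_def by (rule sum_row_weight_linear_sq)
  also have "\<dots> \<le> (\<Sum>j<d. of_bool (y ! j) / 4)"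
  proof (intro sum_mono)
    fix j
    have "p j * (1 - p j) = 1/4 - (p j - 1/2)\<^sup>2" by (simp add: power2_eq_square algebra_simps)
    then show "(of_bool (y ! j))\<^sup>2 * (p j * (1 - p j)) \<le> of_bool (y ! j) / (4 :: real)"
      by auto
  qed
  finally show ?thesis by (simp only: count_ones_def sum_divide_distrib)
qed

lemma max_zero_le_am_gm: "(c :: real) > 0 \<Longrightarrow> max 0 z \<le> (z\<^sup>2 / c + c) / 2"
proof -
  assume c: "c > 0"
  have "0 \<le> (z - c)\<^sup>2" by simp
  then have "2 * c * z \<le> z\<^sup>2 + c\<^sup>2" by (simp add: power2_eq_square algebra_simps)
  then show ?thesis using c by (simp add: field_simps power2_eq_square add_pos_nonneg)
qed

lemma sum_row_weight_pos_row_correlation: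
  assumes "c > 0" and p: "\<forall>j<d. 0 \<le> p j \<and> p j \<le> 1"
  shows "(\<Sum>r\<in>binary_rows d. row_weight p d r * max 0 (row_correlation p d r y))
      \<le> (count_ones d y / 4 / c + c) / 2"
proof -
  have "(\<Sum>r\<in>binary_rows d. row_weight p d r * max 0 (row_correlation p d r y))
      \<le> (\<Sum>r\<in>binary_rows d. row_weight p d r * (((row_correlation p d r y)\<^sup>2 / c + c) / 2))"
    using p by (intro sum_mono mult_left_mono row_weight_nonneg max_zero_le_am_gm \<open>c > 0\<close>)
  also have "\<dots> = ((\<Sum>r\<in>binary_rows d. row_weight p d r * (row_correlation p d r y)\<^sup>2) / c + c) / 2"
    by (simp add: add_divide_distrib distrib_left sum.distrib sum_divide_distrib[symmetric]
        sum_distrib_left[symmetric] sum_distrib_right[symmetric] sum_row_weight)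
  also have "\<dots> \<le> (count_ones d y / 4 / c + c) / 2"
    using divide_right_mono[OF sum_row_weight_row_correlation_sq[of p d y], of c] \<open>c > 0\<close> by simp
  finally show ?thesis .
qed

lemma sum_data_weight_output_affine:
  assumes "\<forall>x\<in>datasets n d. set_pmf (M x) \<subseteq> binary_rows d"
  shows "(\<Sum>x\<in>datasets n d. data_weight n d p x * (\<Sum>y\<in>binary_rows d. pmf (M x) y * (a * g y + b)))
       = a * (\<Sum>x\<in>datasets n d. data_weight n d p x * (\<Sum>y\<in>binary_rows d. pmf (M x) y * g y)) + b"
proof -
  have "(\<Sum>y\<in>binary_rows d. pmf (M x) y * (a * g y + b)) = a * (\<Sum>y\<in>binary_rows d. pmf (M x) y * g y) + b"
    if "x \<in> datasets n d" for x
    using assms that by (intro sum_mult_affine sum_pmf_binary_rows) auto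
  then have "(\<Sum>x\<in>datasets n d. data_weight n d p x * (\<Sum>y\<in>binary_rows d. pmf (M x) y * (a * g y + b)))
      = (\<Sum>x\<in>datasets n d. data_weight n d p x * (a * (\<Sum>y\<in>binary_rows d. pmf (M x) y * g y) + b))"
    by (intro sum.cong) auto
  also have "\<dots> = a * (\<Sum>x\<in>datasets n d. data_weight n d p x * (\<Sum>y\<in>binary_rows d. pmf (M x) y * g y)) + b"
    by (intro sum_mult_affine sum_data_weight)
  finally show ?thesis .
qed

lemma dp_row_correlation_le:
  assumes supp: "\<forall>x\<in>datasets n d. set_pmf (M x) \<subseteq> binary_rows d"
    and dp: "diff_private n d \<epsilon> \<delta> M" and "0 \<le> \<delta>" and "i < n" and "c > 0"
    and p: "\<forall>j<d. 0 \<le> p j \<and> p j \<le> 1"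
  shows "(\<Sum>x\<in>datasets n d. data_weight n d p x *
           (\<Sum>y\<in>binary_rows d. pmf (M x) y * row_correlation p d (x ! i) y))
     \<le> exp \<epsilon> * ((\<Sum>x\<in>datasets n d. data_weight n d p x *
           (\<Sum>y\<in>binary_rows d. pmf (M x) y * count_ones d y)) / 4 / c + c) / 2 + d * \<delta>"
proof -
  let ?D = "datasets n d" and ?Y = "binary_rows d" and ?w = "data_weight n d p" and ?v = "row_weight p d"
  define f where "f r y = max 0 (row_correlation p d r y)" for r y
  have "(\<Sum>x\<in>?D. ?w x * (\<Sum>y\<in>?Y. pmf (M x) y * row_correlation p d (x ! i) y))
      \<le> (\<Sum>x\<in>?D. ?w x * (\<Sum>y\<in>?Y. pmf (M x) y * f (x ! i) y))"
    using p by (intro sum_mono mult_left_mono data_weight_nonneg) (auto simp: f_def)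
  also have "\<dots> \<le> exp \<epsilon> * (\<Sum>x\<in>?D. \<Sum>r\<in>?Y. ?w x * ?v r * (\<Sum>y\<in>?Y. pmf (M x) y * f r y)) + d * \<delta>"
    using p row_correlation_le[OF p] by (intro dp_resample_row[OF dp \<open>0 \<le> \<delta>\<close> \<open>i < n\<close>]) (auto simp: f_def)
  also have "(\<Sum>x\<in>?D. \<Sum>r\<in>?Y. ?w x * ?v r * (\<Sum>y\<in>?Y. pmf (M x) y * f r y))
      = (\<Sum>x\<in>?D. ?w x * (\<Sum>y\<in>?Y. pmf (M x) y * (\<Sum>r\<in>?Y. ?v r * f r y)))"
  proof (intro sum.cong refl)
    fix x
    have "(\<Sum>r\<in>?Y. ?w x * ?v r * (\<Sum>y\<in>?Y. pmf (M x) y * f r y))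
        = ?w x * (\<Sum>r\<in>?Y. \<Sum>y\<in>?Y. pmf (M x) y * (?v r * f r y))"
      by (simp add: sum_distrib_left mult.assoc mult.left_commute)
    also have "\<dots> = ?w x * (\<Sum>y\<in>?Y. pmf (M x) y * (\<Sum>r\<in>?Y. ?v r * f r y))"
      by (subst sum.swap) (simp add: sum_distrib_left)
    finally show "(\<Sum>r\<in>?Y. ?w x * ?v r * (\<Sum>y\<in>?Y. pmf (M x) y * f r y))
        = ?w x * (\<Sum>y\<in>?Y. pmf (M x) y * (\<Sum>r\<in>?Y. ?v r * f r y))" .
  qed
  also have "\<dots> \<le> (\<Sum>x\<in>?D. ?w x * (\<Sum>y\<in>?Y. pmf (M x) y * ((count_ones d y / 4 / c + c) / 2)))"
    unfolding f_def using p \<open>c > 0\<close>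
    by (intro sum_mono mult_left_mono data_weight_nonneg pmf_nonneg sum_row_weight_pos_row_correlation)
  also have "\<dots> = 1 / (8 * c) * (\<Sum>x\<in>?D. ?w x * (\<Sum>y\<in>?Y. pmf (M x) y * count_ones d y)) + c / 2"
    using sum_data_weight_output_affine[OF supp, of p "1 / (8 * c)" "count_ones d" "c / 2"]
    by (simp add: field_simps)
  finally show ?thesis using \<open>c > 0\<close> by (simp add: field_simps)
qed

section \<open>The Beta prior\<close>

lemma Beta_real_pos: "0 < a \<Longrightarrow> 0 < b \<Longrightarrow> 0 < Beta a (b :: real)"
  by (simp add: Beta_def)

lemma beta_density_nonneg: "0 < a \<Longrightarrow> 0 < b \<Longrightarrow> 0 \<le> beta_density a b t"
  by (auto simp: beta_density_def intro!: divide_nonneg_pos Beta_real_pos)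

lemma borel_measurable_beta_density[measurable]: "beta_density a b \<in> borel_measurable borel"
  unfolding beta_density_def by measurable

lemma beta_density_mult_monomial:
  fixes m k :: nat
  shows "beta_density a b t * (t ^ m * (1 - t) ^ k) =
    (if t \<in> {0<..<1} then t powr (real m + a - 1) * (1 - t) powr (real k + b - 1) / Beta a b else 0)"
proof (cases "0 < t \<and> t < 1")
  case True
  then have "t ^ m = t powr real m" "(1 - t) ^ k = (1 - t) powr real k" by (simp_all add: powr_realpow)
  then show ?thesis using True by (simp add: beta_density_def powr_add[symmetric] field_simps)
qed (auto simp: beta_density_def)

lemma has_integral_beta_density_monomial:
  fixes m k :: nat
  assumes "0 < a" "0 < b"
  shows "((\<lambda>t. beta_density a b t * (t ^ m * (1 - t) ^ k)) has_integral
            Beta (real m + a) (real k + b) / Beta a b) UNIV"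
proof -
  have "((\<lambda>t. t powr (real m + a - 1) * (1 - t) powr (real k + b - 1)) has_integral
      Beta (real m + a) (real k + b)) {0..1}"
    by (rule has_integral_Beta_real) (use assms in auto)
  then have "((\<lambda>t. t powr (real m + a - 1) * (1 - t) powr (real k + b - 1) / Beta a b) has_integral
       Beta (real m + a) (real k + b) / Beta a b) {0<..<1}"
    by (subst (asm) has_integral_Icc_iff_Ioo) (rule has_integral_divide)
  then show ?thesis
    unfolding beta_density_mult_monomial by (subst has_integral_restrict_UNIV)
qed

lemma beta_density_mult_monomial_nonneg:
  "0 < a \<Longrightarrow> 0 < b \<Longrightarrow> 0 \<le> beta_density a b t * (t ^ m * (1 - t) ^ k)"
  by (cases "0 < t \<and> t < 1") (auto simp: beta_density_def intro!: divide_nonneg_pos Beta_real_pos)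

lemma nn_integral_beta_density_monomial:
  fixes m k :: nat
  assumes "0 < a" "0 < b"
  shows "(\<integral>\<^sup>+t. ennreal (beta_density a b t * (t ^ m * (1 - t) ^ k)) \<partial>lborel)
      = ennreal (Beta (real m + a) (real k + b) / Beta a b)"
proof (rule nn_integral_has_integral_lborel[OF _ _ has_integral_beta_density_monomial[OF assms]])
  show "(\<lambda>t. beta_density a b t * (t ^ m * (1 - t) ^ k)) \<in> borel_measurable borel" by measurable
  show "0 \<le> beta_density a b t * (t ^ m * (1 - t) ^ k)" for t
    using assms by (rule beta_density_mult_monomial_nonneg)
qed

lemma prob_space_beta_measure: "0 < a \<Longrightarrow> 0 < b \<Longrightarrow> prob_space (beta_measure a b)"
  unfolding beta_measure_def
  using nn_integral_beta_density_monomial[of a b 0 0] Beta_real_pos[of a b]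
  by (intro prob_spaceI) (auto simp: emeasure_density)

lemma beta_measure_moment:
  fixes m k :: nat
  assumes "0 < a" "0 < b"
  shows "integrable (beta_measure a b) (\<lambda>t. t ^ m * (1 - t) ^ k)"
    and "(\<integral>t. t ^ m * (1 - t) ^ k \<partial>beta_measure a b) = Beta (real m + a) (real k + b) / Beta a b"
proof -
  let ?f = "\<lambda>t. beta_density a b t * (t ^ m * (1 - t) ^ k)"
  have nonneg: "0 \<le> ?f t" for t
    using assms by (rule beta_density_mult_monomial_nonneg)
  note nn = nn_integral_beta_density_monomial[OF assms, of m k]
  then have "integrable lborel ?f"
    by (intro integrableI_nonneg) (auto simp: nonneg)
  then show "integrable (beta_measure a b) (\<lambda>t. t ^ m * (1 - t) ^ k)"
    unfolding beta_measure_def using beta_density_nonneg[OF assms] by (subst integrable_density) auto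
  have "(\<integral>t. t ^ m * (1 - t) ^ k \<partial>beta_measure a b) = (\<integral>t. ?f t \<partial>lborel)"
    unfolding beta_measure_def using beta_density_nonneg[OF assms] by (subst integral_density) auto
  also have "\<dots> = Beta (real m + a) (real k + b) / Beta a b"
    using nonneg nn assms by (subst integral_eq_nn_integral) (auto simp: Beta_real_pos)
  finally show "(\<integral>t. t ^ m * (1 - t) ^ k \<partial>beta_measure a b) = Beta (real m + a) (real k + b) / Beta a b" .
qed

lemma AE_beta_measure_01: "AE t in beta_measure a b. 0 < t \<and> t < 1"
  unfolding beta_measure_def by (subst AE_density) (auto simp: beta_density_def)

lemma Beta_le_quarter_powr:
  fixes \<beta> :: real
  assumes "1 \<le> \<beta>"
  shows "Beta \<beta> \<beta> \<le> (1/4) powr (\<beta> - 1)"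
proof -
  have "((\<lambda>t. t powr (\<beta> - 1) * (1 - t) powr (\<beta> - 1)) has_integral Beta \<beta> \<beta>) {0..1}"
    by (rule has_integral_Beta_real) (use assms in auto)
  moreover have "((\<lambda>t::real. (1/4 :: real) powr (\<beta> - 1)) has_integral ((1/4) powr (\<beta> - 1))) {0..1}"
    using has_integral_const_real[of "(1/4 :: real) powr (\<beta> - 1)" 0 1] by simp
  moreover have "t powr (\<beta> - 1) * (1 - t) powr (\<beta> - 1) \<le> (1/4) powr (\<beta> - 1)" if "t \<in> {0..1}" for t :: real
  proof -
    have "t * (1 - t) = 1/4 - (t - 1/2)\<^sup>2" by (simp add: power2_eq_square algebra_simps)
    then have "t * (1 - t) \<le> 1/4" by simp
    moreover have "0 \<le> t * (1 - t)" using that by simp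
    ultimately have "(t * (1 - t)) powr (\<beta> - 1) \<le> (1/4) powr (\<beta> - 1)"
      using assms by (intro powr_mono2) auto
    then show ?thesis by (simp add: powr_mult)
  qed
  ultimately show ?thesis by (rule has_integral_le)
qed

lemma beta_measure_tail_lower:
  assumes "1 \<le> \<beta>"
  shows "1/16 * (15/64) powr (\<beta> - 1) \<le> measure (beta_measure \<beta> \<beta>) {7/8..}"
proof -
  let ?B = "Beta \<beta> \<beta>" and ?c = "(15/256 :: real) powr (\<beta> - 1) / Beta \<beta> \<beta>"
  have B: "0 < ?B" using assms by (intro Beta_real_pos) auto
  interpret prob_space "beta_measure \<beta> \<beta>" using assms by (intro prob_space_beta_measure) auto
  text \<open>On \<open>[7/8, 15/16]\<close> we have \<open>t (1 - t) \<ge> 15/256\<close>, which bounds the density from below.\<close>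
  have density_lower: "ennreal ?c * indicator {7/8..15/16} t \<le> ennreal (beta_density \<beta> \<beta> t) * indicator {7/8..} t"
    for t :: real
  proof (cases "t \<in> {7/8..15/16}")
    case True
    have "t * (1 - t) - 15/256 = (15/16 - t) * (t - 1/16)" by (simp add: field_simps)
    moreover have "0 \<le> (15/16 - t) * (t - 1/16)" using True by (intro mult_nonneg_nonneg) auto
    ultimately have "?c \<le> (t * (1 - t)) powr (\<beta> - 1) / ?B"
      by (intro divide_right_mono powr_mono2) (use assms B in auto)
    also have "\<dots> = beta_density \<beta> \<beta> t" using True by (simp add: beta_density_def powr_mult)
    finally show ?thesis using True by (auto simp: indicator_def intro: ennreal_leI)
  qed (auto simp: indicator_def)
  have "ennreal ?c * ennreal (1/16) = (\<integral>\<^sup>+t. ennreal ?c * indicator {7/8..15/16 :: real} t \<partial>lborel)"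
    by (subst nn_integral_cmult_indicator) auto
  also have "\<dots> \<le> (\<integral>\<^sup>+t. ennreal (beta_density \<beta> \<beta> t) * indicator {7/8 :: real..} t \<partial>lborel)"
    by (intro nn_integral_mono density_lower)
  also have "\<dots> = emeasure (beta_measure \<beta> \<beta>) {7/8..}"
    unfolding beta_measure_def by (subst emeasure_density) auto
  also have "\<dots> = ennreal (measure (beta_measure \<beta> \<beta>) {7/8..})"
    by (rule emeasure_eq_measure)
  finally have "?c * (1/16) \<le> measure (beta_measure \<beta> \<beta>) {7/8..}"
    using B by (subst (asm) ennreal_mult[symmetric]) (auto simp: ennreal_le_iff)
  moreover have "(15/64) powr (\<beta> - 1) \<le> ?c"
  proof -
    have "(15/64) powr (\<beta> - 1) = (15/256 :: real) powr (\<beta> - 1) / (1/4) powr (\<beta> - 1)"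
      by (simp add: powr_divide[symmetric])
    also have "\<dots> \<le> ?c"
      by (intro divide_left_mono Beta_le_quarter_powr assms mult_pos_pos B) auto
    finally show ?thesis .
  qed
  ultimately show ?thesis by simp
qed

lemma prob_space_beta_prior: "0 < \<beta> \<Longrightarrow> prob_space (beta_prior d \<beta>)"
  unfolding beta_prior_def by (intro prob_space_PiM prob_space_beta_measure)

lemma beta_prior_prod:
  fixes F :: "nat \<Rightarrow> real \<Rightarrow> real"
  assumes "0 < \<beta>" and F: "\<And>j. j < d \<Longrightarrow> integrable (beta_measure \<beta> \<beta>) (F j)"
  shows "integrable (beta_prior d \<beta>) (\<lambda>p. \<Prod>j<d. F j (p j))"
    and "(\<integral>p. (\<Prod>j<d. F j (p j)) \<partial>beta_prior d \<beta>) = (\<Prod>j<d. \<integral>t. F j t \<partial>beta_measure \<beta> \<beta>)"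
proof -
  interpret P: prob_space "beta_measure \<beta> \<beta>" by (rule prob_space_beta_measure) (use assms in auto)
  interpret product_sigma_finite "\<lambda>_ :: nat. beta_measure \<beta> \<beta>"
    by (simp add: product_sigma_finite_def P.sigma_finite_measure_axioms)
  show "integrable (beta_prior d \<beta>) (\<lambda>p. \<Prod>j<d. F j (p j))"
    unfolding beta_prior_def by (rule product_integrable_prod) (use F in auto)
  show "(\<integral>p. (\<Prod>j<d. F j (p j)) \<partial>beta_prior d \<beta>) = (\<Prod>j<d. \<integral>t. F j t \<partial>beta_measure \<beta> \<beta>)"
    unfolding beta_prior_def by (rule product_integral_prod) (use F in auto)
qed

lemma beta_prior_component:
  assumes "0 < \<beta>" "j < d"
  shows "distr (beta_prior d \<beta>) (beta_measure \<beta> \<beta>) (\<lambda>p. p j) = beta_measure \<beta> \<beta>"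
  unfolding beta_prior_def using assms by (intro distr_PiM_component prob_space_beta_measure) auto

lemma AE_beta_prior_01:
  assumes "0 < \<beta>"
  shows "AE p in beta_prior d \<beta>. \<forall>j<d. 0 < p j \<and> p j < 1"
proof -
  have "\<forall>j\<in>{..<d}. AE p in beta_prior d \<beta>. 0 < p j \<and> p j < 1"
    unfolding beta_prior_def using assms
    by (intro ballI AE_PiM_component[where P="\<lambda>t. 0 < t \<and> t < 1"] prob_space_beta_measure AE_beta_measure_01) auto
  then have "AE p in beta_prior d \<beta>. \<forall>j\<in>{..<d}. 0 < p j \<and> p j < 1"
    by (rule eventually_ball_finite[rotated]) simp
  then show ?thesis by (rule eventually_mono) auto
qed

lemma integral_count_above:
  assumes "0 < \<beta>"
  shows "integrable (beta_prior d \<beta>) (\<lambda>p. \<Sum>j<d. indicator {t..} (p j) :: real)"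
    and "(\<integral>p. (\<Sum>j<d. indicator {t..} (p j) :: real) \<partial>beta_prior d \<beta>) = d * measure (beta_measure \<beta> \<beta>) {t..}"
proof -
  interpret prob_space "beta_prior d \<beta>" by (rule prob_space_beta_prior[OF assms])
  have measurable: "(\<lambda>p. p j) \<in> measurable (beta_prior d \<beta>) (beta_measure \<beta> \<beta>)" if "j < d" for j
    using that unfolding beta_prior_def by (auto intro: measurable_component_singleton)
  have integral: "(\<integral>p. indicator {t..} (p j) \<partial>beta_prior d \<beta>) = measure (beta_measure \<beta> \<beta>) {t..}"
    if "j < d" for j
    using integral_distr[OF measurable[OF that], of "indicator {t..} :: real \<Rightarrow> real"]
      beta_prior_component[OF assms that]
    by (simp add: beta_measure_def)
  have integrable: "integrable (beta_prior d \<beta>) (\<lambda>p. indicator {t..} (p j) :: real)" if "j < d" for j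
    using measurable[OF that]
    by (intro integrable_const_bound[where B=1]) (auto simp: beta_measure_def indicator_def)
  show "integrable (beta_prior d \<beta>) (\<lambda>p. \<Sum>j<d. indicator {t..} (p j) :: real)"
    using integrable by (intro Bochner_Integration.integrable_sum) auto
  show "(\<integral>p. (\<Sum>j<d. indicator {t..} (p j) :: real) \<partial>beta_prior d \<beta>) = d * measure (beta_measure \<beta> \<beta>) {t..}"
    using integrable integral by (simp add: Bochner_Integration.integral_sum)
qed

lemma tail_exponent_ge:
  fixes k d :: real
  assumes "0 < k" "16 * k < d"
  shows "16 * k / d \<le> (15/64) powr (1/2 * ln (d / (16 * k)))"
proof -
  define L where "L = ln (d / (16 * k))"
  have "0 \<le> L" unfolding L_def using assms by simp
  have "ln (64/15 :: real) \<le> ln (exp 2)"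
    using exp_lower_Taylor_quadratic[of 2] by (subst ln_le_cancel_iff) auto
  then have "ln (64/15 :: real) \<le> 2" by simp
  then have "- L \<le> 1/2 * L * ln (15/64)"
    using mult_left_mono[OF _ \<open>0 \<le> L\<close>, of "ln (64/15)" 2] by (simp add: ln_div algebra_simps)
  then have "exp (- L) \<le> (15/64) powr (1/2 * L)"
    by (simp add: powr_def mult_ac)
  moreover have "exp (- L) = 16 * k / d"
    unfolding L_def using assms by (simp add: exp_minus field_simps)
  ultimately show ?thesis unfolding L_def by simp
qed

lemma expected_count_above_ge:
  assumes "0 < k" "16 * k < d" and \<beta>: "\<beta> = 1 + 1/2 * ln (d / (16 * k))"
  shows "k \<le> d * measure (beta_measure \<beta> \<beta>) {7/8..}"
proof -
  have "0 < d" using assms by simp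
  have "16 * k / d \<le> (15/64) powr (\<beta> - 1)"
    using tail_exponent_ge[OF assms(1,2)] by (simp add: \<beta>)
  also have "\<dots> \<le> 16 * measure (beta_measure \<beta> \<beta>) {7/8..}"
    using beta_measure_tail_lower[of \<beta>] assms by simp
  finally show ?thesis using \<open>0 < d\<close> by (simp add: field_simps)
qed

definition column_count :: "nat \<Rightarrow> bool list list \<Rightarrow> nat \<Rightarrow> nat" where
  "column_count n x j = card {i\<in>{..<n}. x ! i ! j}"

lemma column_count_le: "column_count n x j \<le> n"
  unfolding column_count_def by (rule order_trans[OF card_mono[of "{..<n}"]]) auto

lemma data_weight_eq_prod_columns:
  "data_weight n d p x = (\<Prod>j<d. p j ^ column_count n x j * (1 - p j) ^ (n - column_count n x j))"
proof -
  have "data_weight n d p x = (\<Prod>j<d. \<Prod>i<n. if x ! i ! j then p j else 1 - p j)"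
    unfolding data_weight_def by (rule prod.swap)
  also have "\<dots> = (\<Prod>j<d. p j ^ column_count n x j * (1 - p j) ^ (n - column_count n x j))"
  proof (intro prod.cong refl)
    fix j
    have "{..<n} \<inter> - {i. x ! i ! j} = {..<n} - {i\<in>{..<n}. x ! i ! j}" by auto
    moreover have "card ({..<n} - {i\<in>{..<n}. x ! i ! j}) = n - column_count n x j"
      unfolding column_count_def by (subst card_Diff_subset) auto
    ultimately have "card ({..<n} \<inter> - {i. x ! i ! j}) = n - column_count n x j" by simp
    moreover have "{..<n} \<inter> {i. x ! i ! j} = {i\<in>{..<n}. x ! i ! j}" by auto
    ultimately show "(\<Prod>i<n. if x ! i ! j then p j else 1 - p j)
        = p j ^ column_count n x j * (1 - p j) ^ (n - column_count n x j)"
      by (simp add: prod.If_cases column_count_def)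
  qed
  finally show ?thesis .
qed

section \<open>The fingerprinting identity\<close>

lemma beta_prior_data_weight_moment:
  assumes "0 < \<beta>" "j0 < d"
  shows "integrable (beta_prior d \<beta>) (\<lambda>p. data_weight n d p x * p j0 ^ e)"
    and "(\<integral>p. data_weight n d p x * p j0 ^ e \<partial>beta_prior d \<beta>) = (\<Prod>j<d.
           Beta (real (column_count n x j + (if j = j0 then e else 0)) + \<beta>)
             (real (n - column_count n x j) + \<beta>) / Beta \<beta> \<beta>)"
proof -
  define F where "F j t = t ^ (column_count n x j + (if j = j0 then e else 0)) * (1 - t) ^ (n - column_count n x j)"
    for j and t :: real
  have eq: "data_weight n d p x * p j0 ^ e = (\<Prod>j<d. F j (p j))" for p :: "nat \<Rightarrow> real"
  proof -
    have "data_weight n d p x * p j0 ^ e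
        = (\<Prod>j<d. p j ^ column_count n x j * (1 - p j) ^ (n - column_count n x j)) *
          (\<Prod>j<d. if j = j0 then p j ^ e else 1)"
      using assms(2) by (simp add: data_weight_eq_prod_columns)
    also have "\<dots> = (\<Prod>j<d. F j (p j))"
      unfolding F_def by (subst prod.distrib[symmetric]) (intro prod.cong refl, auto simp: power_add)
    finally show ?thesis .
  qed
  show "integrable (beta_prior d \<beta>) (\<lambda>p. data_weight n d p x * p j0 ^ e)"
    unfolding eq F_def using assms(1) by (intro beta_prior_prod(1) beta_measure_moment(1))
  show "(\<integral>p. data_weight n d p x * p j0 ^ e \<partial>beta_prior d \<beta>) = (\<Prod>j<d.
           Beta (real (column_count n x j + (if j = j0 then e else 0)) + \<beta>)
             (real (n - column_count n x j) + \<beta>) / Beta \<beta> \<beta>)"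
    unfolding eq F_def using assms(1)
    by (subst beta_prior_prod(2)) (simp_all add: beta_measure_moment)
qed

lemma beta_prior_data_weight_affine:
  assumes "0 < \<beta>" "j < d"
  shows "integrable (beta_prior d \<beta>) (\<lambda>p. data_weight n d p x * (a + b * p j))"
    and "(\<integral>p. data_weight n d p x * (a + b * p j) \<partial>beta_prior d \<beta>)
       = a * (\<integral>p. data_weight n d p x \<partial>beta_prior d \<beta>) + b * (\<integral>p. data_weight n d p x * p j \<partial>beta_prior d \<beta>)"
proof -
  note moment = beta_prior_data_weight_moment(1)[OF assms, of n x]
  have "integrable (beta_prior d \<beta>) (\<lambda>p. data_weight n d p x)"
    "integrable (beta_prior d \<beta>) (\<lambda>p. data_weight n d p x * p j)"
    using moment[of 0] moment[of 1] by simp_all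
  then show "integrable (beta_prior d \<beta>) (\<lambda>p. data_weight n d p x * (a + b * p j))"
    and "(\<integral>p. data_weight n d p x * (a + b * p j) \<partial>beta_prior d \<beta>)
       = a * (\<integral>p. data_weight n d p x \<partial>beta_prior d \<beta>) + b * (\<integral>p. data_weight n d p x * p j \<partial>beta_prior d \<beta>)"
    by (simp_all add: distrib_left mult.left_commute[of _ b])
qed

text \<open>An integration by parts against the Beta density, carried out through the recursion
  \<open>(x + y) B(x + 1, y) = x B(x, y)\<close> of the Beta function.\<close>

lemma beta_prior_fingerprint:
  assumes "0 < \<beta>" "j < d"
  shows "(\<integral>p. data_weight n d p x * (real (column_count n x j) - real n * p j) \<partial>beta_prior d \<beta>)
       = \<beta> * (\<integral>p. data_weight n d p x * (2 * p j - 1) \<partial>beta_prior d \<beta>)"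
proof -
  define I where "I e = (\<integral>p. data_weight n d p x * p j ^ e \<partial>beta_prior d \<beta>)" for e
  define a where "a = real (column_count n x j) + \<beta>"
  define b where "b = real (n - column_count n x j) + \<beta>"
  define K where "K = (\<Prod>j'\<in>{..<d} - {j}. Beta (real (column_count n x j') + \<beta>)
                         (real (n - column_count n x j') + \<beta>) / Beta \<beta> \<beta>)"
  have I: "I e = Beta (a + real e) b / Beta \<beta> \<beta> * K" for e
  proof -
    have "I e = (\<Prod>j'<d. Beta (real (column_count n x j' + (if j' = j then e else 0)) + \<beta>)
             (real (n - column_count n x j') + \<beta>) / Beta \<beta> \<beta>)"
      unfolding I_def by (rule beta_prior_data_weight_moment(2)[OF assms])
    also have "\<dots> = Beta (a + real e) b / Beta \<beta> \<beta> * K"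
      using assms(2) unfolding K_def a_def b_def
      by (subst prod.remove[of _ j]) (auto simp: algebra_simps intro!: prod.cong)
    finally show ?thesis .
  qed
  have "a \<notin> \<int>\<^sub>\<le>\<^sub>0" using assms(1) by (auto simp: a_def dest: nonpos_Ints_nonpos)
  then have recursion: "(a + b) * Beta (a + 1) b = a * Beta a b" by (rule Beta_plus1_left)
  then have key: "(a - \<beta>) * Beta a b - ((a - \<beta>) + (b - \<beta>)) * Beta (a + 1) b
      = \<beta> * (2 * Beta (a + 1) b - Beta a b)"
    by (simp add: algebra_simps)
  have count: "real (column_count n x j) = a - \<beta>" by (simp add: a_def)
  have n: "real n = (a - \<beta>) + (b - \<beta>)"
    using column_count_le[of n x j] by (simp add: a_def b_def)
  have "(\<integral>p. data_weight n d p x * (real (column_count n x j) - real n * p j) \<partial>beta_prior d \<beta>)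
      = real (column_count n x j) * I 0 - real n * I 1"
    using beta_prior_data_weight_affine(2)[OF assms, of n x "real (column_count n x j)" "- real n"]
    by (simp add: I_def)
  also have "\<dots> = ((a - \<beta>) * Beta a b - ((a - \<beta>) + (b - \<beta>)) * Beta (a + 1) b) * K / Beta \<beta> \<beta>"
    unfolding I count n by (simp add: algebra_simps add_divide_distrib diff_divide_distrib)
  also have "\<dots> = \<beta> * (2 * I 1 - I 0)"
    unfolding key I by (simp add: algebra_simps add_divide_distrib diff_divide_distrib)
  moreover have "(\<integral>p. data_weight n d p x * (2 * p j - 1) \<partial>beta_prior d \<beta>) = 2 * I 1 - I 0"
    using beta_prior_data_weight_affine(2)[OF assms, of n x "- 1" 2] by (simp add: I_def algebra_simps)
  ultimately show ?thesis by simp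
qed

section \<open>Correlation, bias and expected output weight\<close>

definition correlation :: "nat \<Rightarrow> nat \<Rightarrow> (bool list list \<Rightarrow> bool list pmf) \<Rightarrow> (nat \<Rightarrow> real) \<Rightarrow> real" where
  "correlation n d M p = (\<Sum>j<d. \<Sum>x\<in>datasets n d. measure_pmf.prob (M x) {y. y ! j} *
     (data_weight n d p x * (real (column_count n x j) - real n * p j)))"

definition expected_ones :: "nat \<Rightarrow> nat \<Rightarrow> (bool list list \<Rightarrow> bool list pmf) \<Rightarrow> (nat \<Rightarrow> real) \<Rightarrow> real" where
  "expected_ones n d M p = (\<Sum>j<d. cond_prob_one n d M p j)"

definition bias :: "nat \<Rightarrow> nat \<Rightarrow> (bool list list \<Rightarrow> bool list pmf) \<Rightarrow> (nat \<Rightarrow> real) \<Rightarrow> real" where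
  "bias n d M p = (\<Sum>j<d. cond_prob_one n d M p j * (2 * p j - 1))"

lemma sum_of_bool_column: "(\<Sum>i<n. of_bool (x ! i ! j) - p) = real (column_count n x j) - real n * (p :: real)"
proof -
  have "{..<n} \<inter> {i. x ! i ! j} = {i\<in>{..<n}. x ! i ! j}" by auto
  then show ?thesis by (simp add: sum_subtractf column_count_def)
qed

lemma sum_row_correlation:
  assumes "set_pmf Q \<subseteq> binary_rows d"
  shows "(\<Sum>i<n. \<Sum>y\<in>binary_rows d. pmf Q y * row_correlation p d (x ! i) y)
       = (\<Sum>j<d. measure_pmf.prob Q {y. y ! j} * (real (column_count n x j) - real n * p j))"
proof -
  have "(\<Sum>i<n. \<Sum>y\<in>binary_rows d. pmf Q y * row_correlation p d (x ! i) y)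
      = (\<Sum>i<n. \<Sum>y\<in>binary_rows d. \<Sum>j<d. pmf Q y * of_bool (y ! j) * (of_bool (x ! i ! j) - p j))"
    by (simp only: row_correlation_def sum_distrib_left mult.assoc)
  also have "\<dots> = (\<Sum>y\<in>binary_rows d. \<Sum>i<n. \<Sum>j<d. pmf Q y * of_bool (y ! j) * (of_bool (x ! i ! j) - p j))"
    by (rule sum.swap)
  also have "\<dots> = (\<Sum>y\<in>binary_rows d. \<Sum>j<d. \<Sum>i<n. pmf Q y * of_bool (y ! j) * (of_bool (x ! i ! j) - p j))"
    by (intro sum.cong refl sum.swap)
  also have "\<dots> = (\<Sum>j<d. \<Sum>y\<in>binary_rows d. \<Sum>i<n. pmf Q y * of_bool (y ! j) * (of_bool (x ! i ! j) - p j))"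
    by (rule sum.swap)
  also have "\<dots> = (\<Sum>j<d. \<Sum>y\<in>binary_rows d. pmf Q y * of_bool (y ! j) * (real (column_count n x j) - real n * p j))"
    by (simp only: sum_distrib_left[symmetric] sum_of_bool_column)
  also have "\<dots> = (\<Sum>j<d. measure_pmf.prob Q {y. y ! j} * (real (column_count n x j) - real n * p j))"
    by (simp add: measure_pmf_eq_sum_binary_rows[OF assms] sum_distrib_right)
  finally show ?thesis .
qed

lemma correlation_eq_sum_rows:
  assumes "\<forall>x\<in>datasets n d. set_pmf (M x) \<subseteq> binary_rows d"
  shows "correlation n d M p = (\<Sum>i<n. \<Sum>x\<in>datasets n d.
           data_weight n d p x * (\<Sum>y\<in>binary_rows d. pmf (M x) y * row_correlation p d (x ! i) y))"
proof -
  have "(\<Sum>i<n. \<Sum>x\<in>datasets n d.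
          data_weight n d p x * (\<Sum>y\<in>binary_rows d. pmf (M x) y * row_correlation p d (x ! i) y))
      = (\<Sum>x\<in>datasets n d. data_weight n d p x *
          (\<Sum>i<n. \<Sum>y\<in>binary_rows d. pmf (M x) y * row_correlation p d (x ! i) y))"
    by (subst sum.swap) (simp add: sum_distrib_left)
  also have "\<dots> = (\<Sum>x\<in>datasets n d. data_weight n d p x * (\<Sum>j<d.
          measure_pmf.prob (M x) {y. y ! j} * (real (column_count n x j) - real n * p j)))"
    using assms by (intro sum.cong refl) (simp add: sum_row_correlation)
  also have "\<dots> = correlation n d M p"
    unfolding correlation_def by (subst sum.swap) (simp add: sum_distrib_left mult_ac)
  finally show ?thesis by simp
qed

lemma expected_ones_eq_sum_rows:
  assumes "\<forall>x\<in>datasets n d. set_pmf (M x) \<subseteq> binary_rows d"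
  shows "expected_ones n d M p
       = (\<Sum>x\<in>datasets n d. data_weight n d p x * (\<Sum>y\<in>binary_rows d. pmf (M x) y * count_ones d y))"
proof -
  have "(\<Sum>y\<in>binary_rows d. pmf (M x) y * count_ones d y) = (\<Sum>j<d. measure_pmf.prob (M x) {y. y ! j})"
    if "x \<in> datasets n d" for x
  proof -
    have "set_pmf (M x) \<subseteq> binary_rows d" using assms that by blast
    then show ?thesis unfolding count_ones_def sum_distrib_left
      by (subst sum.swap) (simp add: measure_pmf_eq_sum_binary_rows)
  qed
  moreover have "expected_ones n d M p
      = (\<Sum>x\<in>datasets n d. data_weight n d p x * (\<Sum>j<d. measure_pmf.prob (M x) {y. y ! j}))"
    unfolding expected_ones_def cond_prob_one_def sum_distrib_left by (rule sum.swap)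
  ultimately show ?thesis by simp
qed

lemma dp_correlation_le:
  assumes "\<forall>x\<in>datasets n d. set_pmf (M x) \<subseteq> binary_rows d"
    and "diff_private n d \<epsilon> \<delta> M" and "0 \<le> \<delta>" and "c > 0"
    and "\<forall>j<d. 0 \<le> p j \<and> p j \<le> 1"
  shows "correlation n d M p \<le> n * (exp \<epsilon> * (expected_ones n d M p / 4 / c + c) / 2 + d * \<delta>)"
proof -
  have "correlation n d M p \<le> (\<Sum>i<n. exp \<epsilon> * (expected_ones n d M p / 4 / c + c) / 2 + d * \<delta>)"
    unfolding correlation_eq_sum_rows[OF assms(1)] expected_ones_eq_sum_rows[OF assms(1)]
    by (intro sum_mono dp_row_correlation_le assms) simp
  then show ?thesis by simp
qed

lemma integrable_data_weight_centered_count: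
  "0 < \<beta> \<Longrightarrow> j < d \<Longrightarrow>
    integrable (beta_prior d \<beta>) (\<lambda>p. data_weight n d p x * (real (column_count n x j) - real n * p j))"
  using beta_prior_data_weight_affine(1)[of \<beta> j d n x "real (column_count n x j)" "- real n"] by simp

lemma integrable_data_weight_sign:
  "0 < \<beta> \<Longrightarrow> j < d \<Longrightarrow> integrable (beta_prior d \<beta>) (\<lambda>p. data_weight n d p x * (2 * p j - 1))"
  using beta_prior_data_weight_affine(1)[of \<beta> j d n x "- 1" 2] by (simp add: algebra_simps)

lemma integrable_correlation: "0 < \<beta> \<Longrightarrow> integrable (beta_prior d \<beta>) (correlation n d M)"
  unfolding correlation_def
  by (intro Bochner_Integration.integrable_sum Bochner_Integration.integrable_mult_right
      integrable_data_weight_centered_count) auto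

lemma bias_eq:
  "bias n d M p = (\<Sum>j<d. \<Sum>x\<in>datasets n d. measure_pmf.prob (M x) {y. y ! j} *
     (data_weight n d p x * (2 * p j - 1)))"
  unfolding bias_def cond_prob_one_def sum_distrib_right by (simp add: mult_ac)

lemma integrable_bias: "0 < \<beta> \<Longrightarrow> integrable (beta_prior d \<beta>) (bias n d M)"
  unfolding bias_eq[abs_def]
  by (intro Bochner_Integration.integrable_sum Bochner_Integration.integrable_mult_right
      integrable_data_weight_sign) auto

lemma integrable_expected_ones:
  assumes "0 < \<beta>"
  shows "integrable (beta_prior d \<beta>) (expected_ones n d M)"
proof -
  have "integrable (beta_prior d \<beta>) (\<lambda>p. data_weight n d p x)" if "j < d" for j x
    using beta_prior_data_weight_affine(1)[OF assms that, of n x 1 0] by simp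
  then show ?thesis unfolding expected_ones_def cond_prob_one_def
    by (intro Bochner_Integration.integrable_sum Bochner_Integration.integrable_mult_left) auto
qed

lemma integral_double_sum_mult:
  fixes f :: "'i \<Rightarrow> 'j \<Rightarrow> 'a \<Rightarrow> real"
  assumes "\<And>i j. i \<in> I \<Longrightarrow> j \<in> J \<Longrightarrow> integrable M (f i j)"
  shows "(\<integral>p. (\<Sum>i\<in>I. \<Sum>j\<in>J. c i j * f i j p) \<partial>M) = (\<Sum>i\<in>I. \<Sum>j\<in>J. c i j * (\<integral>p. f i j p \<partial>M))"
proof -
  have "(\<integral>p. (\<Sum>i\<in>I. \<Sum>j\<in>J. c i j * f i j p) \<partial>M) = (\<Sum>i\<in>I. \<integral>p. (\<Sum>j\<in>J. c i j * f i j p) \<partial>M)"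
    using assms by (intro Bochner_Integration.integral_sum Bochner_Integration.integrable_sum
        Bochner_Integration.integrable_mult_right)
  also have "\<dots> = (\<Sum>i\<in>I. \<Sum>j\<in>J. c i j * (\<integral>p. f i j p \<partial>M))"
    using assms by (intro sum.cong refl) (simp add: Bochner_Integration.integral_sum)
  finally show ?thesis .
qed

lemma integral_correlation_eq_bias:
  assumes "0 < \<beta>"
  shows "(\<integral>p. correlation n d M p \<partial>beta_prior d \<beta>) = \<beta> * (\<integral>p. bias n d M p \<partial>beta_prior d \<beta>)"
proof -
  have "(\<integral>p. correlation n d M p \<partial>beta_prior d \<beta>) = (\<Sum>j<d. \<Sum>x\<in>datasets n d. measure_pmf.prob (M x) {y. y ! j} *
      (\<integral>p. data_weight n d p x * (real (column_count n x j) - real n * p j) \<partial>beta_prior d \<beta>))"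
    unfolding correlation_def
    by (intro integral_double_sum_mult integrable_data_weight_centered_count assms) simp
  also have "\<dots> = \<beta> * (\<Sum>j<d. \<Sum>x\<in>datasets n d. measure_pmf.prob (M x) {y. y ! j} *
      (\<integral>p. data_weight n d p x * (2 * p j - 1) \<partial>beta_prior d \<beta>))"
    unfolding sum_distrib_left by (intro sum.cong refl) (subst beta_prior_fingerprint[OF assms], auto)
  also have "\<dots> = \<beta> * (\<integral>p. bias n d M p \<partial>beta_prior d \<beta>)"
    unfolding bias_eq
    by (subst integral_double_sum_mult) (auto intro: integrable_data_weight_sign assms)
  finally show ?thesis .
qed

section \<open>Consequences of accuracy\<close>

lemma cond_prob_one_nonneg: "\<forall>j<d. 0 \<le> p j \<and> p j \<le> 1 \<Longrightarrow> 0 \<le> cond_prob_one n d M p j"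
  unfolding cond_prob_one_def by (intro sum_nonneg mult_nonneg_nonneg data_weight_nonneg) auto

lemma bias_ge:
  assumes p: "\<forall>j<d. 0 \<le> p j \<and> p j \<le> 1" and "0 \<le> a"
    and low: "\<forall>j<d. p j \<le> 11/16 \<longrightarrow> cond_prob_one n d M p j \<le> a"
  shows "3/8 * expected_ones n d M p - 11/8 * (d * a) \<le> bias n d M p"
proof -
  have "3/8 * cond_prob_one n d M p j - 11/8 * a \<le> cond_prob_one n d M p j * (2 * p j - 1)"
    if "j < d" for j
  proof (cases "p j \<le> 11/16")
    case True
    have "- cond_prob_one n d M p j \<le> cond_prob_one n d M p j * (2 * p j - 1)"
      using mult_left_mono[of "-1" "2 * p j - 1", OF _ cond_prob_one_nonneg[OF p]] p that by auto
    then show ?thesis using low True that cond_prob_one_nonneg[OF p, of n M j] by force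
  next
    case False
    then have "cond_prob_one n d M p j * (3/8) \<le> cond_prob_one n d M p j * (2 * p j - 1)"
      by (intro mult_left_mono cond_prob_one_nonneg p) auto
    then show ?thesis using \<open>0 \<le> a\<close> by simp
  qed
  then have "(\<Sum>j<d. 3/8 * cond_prob_one n d M p j - 11/8 * a) \<le> bias n d M p"
    unfolding bias_def by (intro sum_mono) auto
  then show ?thesis by (simp add: expected_ones_def sum_subtractf sum_distrib_left)
qed

lemma expected_ones_ge:
  assumes p: "\<forall>j<d. 0 \<le> p j \<and> p j \<le> 1"
    and high: "\<forall>j<d. 7/8 \<le> p j \<longrightarrow> 15/16 \<le> cond_prob_one n d M p j"
  shows "15/16 * (\<Sum>j<d. indicator {7/8..} (p j)) \<le> expected_ones n d M p"
proof -
  have "(\<Sum>j<d. 15/16 * indicator {7/8..} (p j)) \<le> (\<Sum>j<d. cond_prob_one n d M p j)"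
    using high cond_prob_one_nonneg[OF p] by (intro sum_mono) (auto simp: indicator_def)
  then show ?thesis by (simp add: expected_ones_def sum_distrib_left)
qed

section \<open>Averaging over the prior\<close>

lemma prob_space_integral_affine:
  fixes f :: "'a \<Rightarrow> real"
  assumes "prob_space M" "integrable M f"
  shows "integrable M (\<lambda>x. a * f x + b)" and "(\<integral>x. a * f x + b \<partial>M) = a * (\<integral>x. f x \<partial>M) + b"
proof -
  interpret prob_space M by fact
  show "integrable M (\<lambda>x. a * f x + b)"
    using assms(2) by (intro Bochner_Integration.integrable_add Bochner_Integration.integrable_mult_right) auto
  show "(\<integral>x. a * f x + b \<partial>M) = a * (\<integral>x. f x \<partial>M) + b"
    using assms(2) prob_space by (subst Bochner_Integration.integral_add) auto
qed

lemma integral_expected_ones_ge: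
  assumes "0 < k" "16 * real k < real d" and \<beta>: "\<beta> = 1 + 1/2 * ln (real d / (16 * real k))"
    and high: "AE p in beta_prior d \<beta>. \<forall>j<d. 7/8 \<le> p j \<longrightarrow> 15/16 \<le> cond_prob_one n d M p j"
  shows "15/16 * real k \<le> (\<integral>p. expected_ones n d M p \<partial>beta_prior d \<beta>)"
proof -
  have "0 \<le> ln (real d / (16 * real k))" using assms by simp
  then have "0 < \<beta>" using \<beta> by simp
  note count = integral_count_above[OF \<open>0 < \<beta>\<close>, of d "7/8"]
  have "AE p in beta_prior d \<beta>. 15/16 * (\<Sum>j<d. indicator {7/8..} (p j)) \<le> expected_ones n d M p"
    using high AE_beta_prior_01[OF \<open>0 < \<beta>\<close>, of d]
    by eventually_elim (use expected_ones_ge[where p=p for p] in \<open>simp add: less_imp_le\<close>)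
  then have "(\<integral>p. 15/16 * (\<Sum>j<d. indicator {7/8..} (p j)) \<partial>beta_prior d \<beta>)
      \<le> (\<integral>p. expected_ones n d M p \<partial>beta_prior d \<beta>)"
    by (intro integral_mono_AE Bochner_Integration.integrable_mult_right count(1)
        integrable_expected_ones \<open>0 < \<beta>\<close>)
  moreover have "real k \<le> d * measure (beta_measure \<beta> \<beta>) {7/8..}"
    using assms by (intro expected_count_above_ge) auto
  ultimately show ?thesis by (simp add: count(2))
qed

lemma integral_bias_ge:
  assumes "0 < \<beta>" "0 \<le> a"
    and low: "AE p in beta_prior d \<beta>. \<forall>j<d. p j \<le> 11/16 \<longrightarrow> cond_prob_one n d M p j \<le> a"
  shows "3/8 * (\<integral>p. expected_ones n d M p \<partial>beta_prior d \<beta>) - 11/8 * (real d * a)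
      \<le> (\<integral>p. bias n d M p \<partial>beta_prior d \<beta>)"
proof -
  note affine = prob_space_integral_affine[OF prob_space_beta_prior[OF \<open>0 < \<beta>\<close>]
      integrable_expected_ones[OF \<open>0 < \<beta>\<close>], where a="3/8" and b="- 11/8 * (real d * a)"]
  have "AE p in beta_prior d \<beta>. 3/8 * expected_ones n d M p + - 11/8 * (real d * a) \<le> bias n d M p"
    using low AE_beta_prior_01[OF \<open>0 < \<beta>\<close>, of d]
    by eventually_elim (use bias_ge[OF _ \<open>0 \<le> a\<close>, where p=p for p] in \<open>simp add: less_imp_le\<close>)
  then have "(\<integral>p. 3/8 * expected_ones n d M p + - 11/8 * (real d * a) \<partial>beta_prior d \<beta>)
      \<le> (\<integral>p. bias n d M p \<partial>beta_prior d \<beta>)"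
    by (intro integral_mono_AE affine(1) integrable_bias \<open>0 < \<beta>\<close>)
  then show ?thesis unfolding affine(2) by simp
qed

lemma integral_correlation_le:
  assumes supp: "\<forall>x\<in>datasets n d. set_pmf (M x) \<subseteq> binary_rows d"
    and dp: "diff_private n d \<epsilon> \<delta> M" and "0 \<le> \<delta>" and "0 < \<beta>"
    and T: "0 < (\<integral>p. expected_ones n d M p \<partial>beta_prior d \<beta>)" (is "0 < ?T")
  shows "(\<integral>p. correlation n d M p \<partial>beta_prior d \<beta>) \<le> real n * exp \<epsilon> * sqrt ?T / 2 + real n * real d * \<delta>"
proof -
  text \<open>The free parameter \<open>c\<close> of the pointwise bound is chosen to balance its two terms.\<close>
  define c where "c = sqrt ?T / 2"
  have "c > 0" using T by (simp add: c_def)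
  define a where "a = real n * exp \<epsilon> / (8 * c)"
  define b where "b = real n * (exp \<epsilon> * c / 2 + real d * \<delta>)"
  note affine = prob_space_integral_affine[OF prob_space_beta_prior[OF \<open>0 < \<beta>\<close>]
      integrable_expected_ones[OF \<open>0 < \<beta>\<close>], where a=a and b=b]
  have "AE p in beta_prior d \<beta>. correlation n d M p \<le> a * expected_ones n d M p + b"
    using AE_beta_prior_01[OF \<open>0 < \<beta>\<close>, of d]
  proof eventually_elim
    case (elim p)
    then have "correlation n d M p \<le> n * (exp \<epsilon> * (expected_ones n d M p / 4 / c + c) / 2 + d * \<delta>)"
      by (intro dp_correlation_le[OF supp dp \<open>0 \<le> \<delta>\<close> \<open>c > 0\<close>]) (simp add: less_imp_le)
    then show ?case using \<open>c > 0\<close> by (simp add: a_def b_def field_simps)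
  qed
  then have "(\<integral>p. correlation n d M p \<partial>beta_prior d \<beta>) \<le> a * ?T + b"
    using integral_mono_AE[OF integrable_correlation[OF \<open>0 < \<beta>\<close>] affine(1)] by (simp add: affine(2))
  also have "a * ?T + b = real n * exp \<epsilon> * sqrt ?T / 2 + real n * real d * \<delta>"
    using T unfolding a_def b_def c_def by (simp add: field_simps real_sqrt_mult[symmetric])
  finally show ?thesis .
qed

lemma sample_size_from_fingerprint_inequality:
  fixes T L \<beta> e :: real and n k :: nat
  assumes "2 \<le> k" "0 \<le> L" and \<beta>: "\<beta> = 1 + 1/2 * L" and T: "15/16 * real k \<le> T"
    and main: "\<beta> * (3/8 * T - 11 * real k / 128) \<le> real n * e * sqrt T / 2 + 1/8"
    and "0 < e" "e \<le> 3"
  shows "1/16 * sqrt (real k) * L \<le> real n"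
proof (rule ccontr)
  assume small: "\<not> ?thesis"
  define s where "s = sqrt T"
  define r where "r = sqrt (real k)"
  have k: "2 \<le> real k" using assms by simp
  then have s: "0 < s" "s\<^sup>2 = T" using T by (simp_all add: s_def)
  have r: "0 \<le> r" "r\<^sup>2 = real k" by (simp_all add: r_def)
  have "(15/16 * r)\<^sup>2 = 225/256 * real k" unfolding power_mult_distrib r(2) by (simp add: power2_eq_square)
  also have "\<dots> \<le> s\<^sup>2" unfolding s(2) using T k by linarith
  finally have "(15/16 * r)\<^sup>2 \<le> s\<^sup>2" .
  then have sr: "15/16 * r \<le> s" by (rule power2_le_imp_le) (use s(1) in simp)
  have n: "real n * e \<le> 1/16 * r * L * 3"
    using small assms by (intro mult_mono) (auto simp: r_def)
  have rLs: "0 \<le> r * L * s" using r s \<open>0 \<le> L\<close> by simp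
  have "real n * e * s / 2 + 1/8 \<le> 3/32 * (r * L * s) + 1/8"
    using mult_right_mono[OF n, of s] s by (simp add: mult_ac)
  also have "\<dots> < 17/60 * s\<^sup>2 + 17/128 * (r * L * s)"
    using rLs s(2) T k by linarith
  also have "17/128 * (r * L * s) = 17/120 * L * s * (15/16 * r)" by (simp add: mult_ac)
  also have "\<dots> \<le> 17/120 * L * s * s"
    using sr s \<open>0 \<le> L\<close> by (intro mult_left_mono) auto
  also have "17/60 * s\<^sup>2 + 17/120 * L * s * s = \<beta> * (17/60 * T)"
    using s(2) \<beta> by (simp add: power2_eq_square algebra_simps)
  also have "\<dots> \<le> \<beta> * (3/8 * T - 11 * real k / 128)"
    using T \<beta> \<open>0 \<le> L\<close> by (intro mult_left_mono) auto
  finally show False using main unfolding s_def by linarith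
qed

theorem corollary4p3:
  fixes n d k :: nat and M :: "bool list list \<Rightarrow> bool list pmf"
  assumes "16 * k \<ge> 32" and "d \<ge> 16 * k"
    and "\<forall>x\<in>datasets n d. set_pmf (M x) \<subseteq> {y. length y = d}"
    and "diff_private n d 1 (1 / (8 * real n * real d)) M"
    and "AE p in beta_prior d (1 + 1/2 * ln (real d / (16 * real k))).
           \<forall>j<d. (p j \<le> 7/8 - 3/16 \<longrightarrow> cond_prob_one n d M p j \<le> real k / (16 * real d))
               \<and> (p j \<ge> 7/8 \<longrightarrow> cond_prob_one n d M p j \<ge> 1 - 1/16)"
  shows "real n \<ge> 1/16 * sqrt (real k) * ln (real d / (16 * real k))"
proof (cases "d = 16 * k")
  case False
  define L where "L = ln (real d / (16 * real k))"
  define \<beta> where "\<beta> = 1 + 1/2 * L"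
  define T where "T = (\<integral>p. expected_ones n d M p \<partial>beta_prior d \<beta>)"
  have k: "2 \<le> k" and dk: "16 * real k < real d" using assms(1,2) False by linarith+
  then have "0 < L" by (simp add: L_def)
  then have "0 < \<beta>" by (simp add: \<beta>_def)
  have accurate: "AE p in beta_prior d \<beta>. \<forall>j<d. (p j \<le> 11/16 \<longrightarrow> cond_prob_one n d M p j \<le> real k / (16 * real d))
      \<and> (7/8 \<le> p j \<longrightarrow> 15/16 \<le> cond_prob_one n d M p j)"
    using assms(5) unfolding \<beta>_def L_def by eventually_elim auto
  have T_ge: "15/16 * real k \<le> T"
    unfolding T_def using k dk accurate by (intro integral_expected_ones_ge) (auto simp: \<beta>_def L_def)
  have "0 < T" using k by (intro order_less_le_trans[OF _ T_ge]) simp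
  have "3/8 * T - 11/8 * (real d * (real k / (16 * real d))) \<le> (\<integral>p. bias n d M p \<partial>beta_prior d \<beta>)"
    unfolding T_def using accurate by (intro integral_bias_ge \<open>0 < \<beta>\<close>) auto
  then have bias: "\<beta> * (3/8 * T - 11 * real k / 128) \<le> (\<integral>p. correlation n d M p \<partial>beta_prior d \<beta>)"
    using dk \<open>0 < \<beta>\<close> by (simp add: integral_correlation_eq_bias)
  have "(\<integral>p. correlation n d M p \<partial>beta_prior d \<beta>)
      \<le> real n * exp 1 * sqrt T / 2 + real n * real d * (1 / (8 * real n * real d))"
    using assms(3,4) \<open>0 < T\<close> unfolding T_def
    by (intro integral_correlation_le \<open>0 < \<beta>\<close>) (auto simp: binary_rows_def)
  also have "\<dots> \<le> real n * exp 1 * sqrt T / 2 + 1/8" by simp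
  finally have "\<beta> * (3/8 * T - 11 * real k / 128) \<le> real n * exp 1 * sqrt T / 2 + 1/8"
    using bias by linarith
  from sample_size_from_fingerprint_inequality[OF k _ \<beta>_def T_ge this exp_gt_zero exp_le] \<open>0 < L\<close>
  show ?thesis by (simp add: L_def)
qed simp

end
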